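(* Let $q$ be an odd prime power, $d$ a positive integer, and $\varphi_d$ the coloring defined below. If $S \subseteq (\mathbb{F}_q^* )^d$ is a set of $p\ge 1$ vectors with a leftover structure under $\varphi_d$, then $\mathrm{FS}(S) \ge \lceil \log_2 p\rceil + 1$.
   Context: $\mathbb{F}_q^*$ is the set of nonzero elements of $\mathbb{F}_q$, endowed with an arbitrary fixed linear order; $(\mathbb{F}_q^* )^d$ is ordered lexicographically with respect to it. Let $C_d = \mathrm{DOT} \sqcup \mathrm{ZERO}\sqcup\mathrm{UP}\sqcup\mathrm{DOWN}$, where $\mathrm{DOT} = \mathbb{F}_q^*$ and ZERO, UP, DOWN are three disjoint copies of $\{1,\dots,d\}\times \mathbb{F}_q$. For distinct $x<y$ in $(\mathbb{F}_q^* )^d$, let $i$ be the first coordinate where $x$ and $y$ differ, and $x\cdot y$ the standard dot product; $\varphi_d(x,y)=\varphi_d(y,x)$ is $(i,x_i+y_i)$ in ZERO if $x\cdot y=0$; $(i,x_i+y_i)$ in UP if $x\cdot y\ne 0$ and $x\cdot y=x\cdot x$; $(i,x_i+y_i)$ in DOWN if $x\cdot y\notin\{0,x\cdot x\}$ and $x\cdot y=y\cdot y$; and $x\cdot y\in\mathrm{DOT}$ otherwise. For a vertex set $A$, $\varphi_d(A)$ is the set of colors on pairs inside $A$. $S$ has a leftover structure under $\varphi_d$ if $|S|=1$, or $S$ has a partition $S=A\cup B$ into nonempty sets such that $A$ and $B$ each have a leftover structure, $\varphi_d(A)\cap\varphi_d(B)=\emptyset$, and there is a color $\gamma$ with $\varphi_d(a,b)=\gamma$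 for all $a\in A$, $b\in B$ and $\gamma\notin\varphi_d(A)\cup\varphi_d(B)$. Distinct vectors $s_1,\dots,s_t$ form a $t$-falling star if there are colors $\alpha_2,\dots,\alpha_t$ with $\varphi_d(s_i,s_j)=\alpha_i$ for all $1\le j<i\le t$; $\mathrm{FS}(S)$ is the maximum $t$ such that $S$ contains a $t$-falling star. *)

theory Defs
  imports Complex_Main
begin

text \<open>The field F_q is an arbitrary
  finite field type; the fixed linear order on F_q^* is a parameter lt.\<close>

definition vecs :: "nat \<Rightarrow> (nat \<Rightarrow> 'a::zero) set" where
  "vecs d = {x. (\<forall>i<d. x i \<noteq> 0) \<and> (\<forall>i\<ge>d. x i = 0)}"

definition strict_linorder_on :: "'a set \<Rightarrow> ('a \<Rightarrow> 'a \<Rightarrow> bool) \<Rightarrow> bool" where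
  "strict_linorder_on A lt \<longleftrightarrow>
     (\<forall>a\<in>A. \<not> lt a a) \<and>
     (\<forall>a\<in>A. \<forall>b\<in>A. \<forall>c\<in>A. lt a b \<longrightarrow> lt b c \<longrightarrow> lt a c) \<and>
     (\<forall>a\<in>A. \<forall>b\<in>A. a \<noteq> b \<longrightarrow> lt a b \<or> lt b a)"

definition dotp :: "nat \<Rightarrow> (nat \<Rightarrow> 'a::comm_ring_1) \<Rightarrow> (nat \<Rightarrow> 'a) \<Rightarrow> 'a" where
  "dotp d x y = (\<Sum>i<d. x i * y i)"

definition first_diff :: "(nat \<Rightarrow> 'a) \<Rightarrow> (nat \<Rightarrow> 'a) \<Rightarrow> nat" where
  "first_diff x y = (LEAST i. x i \<noteq> y i)"

definition lex_less :: "('a \<Rightarrow> 'a \<Rightarrow> bool) \<Rightarrow> (nat \<Rightarrow> 'a) \<Rightarrow> (nat \<Rightarrow> 'a) \<Rightarrow> bool" where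
  "lex_less lt x y \<longleftrightarrow> x \<noteq> y \<and> lt (x (first_diff x y)) (y (first_diff x y))"

datatype 'a color = DOT 'a | ZERO nat 'a | UP nat 'a | DOWN nat 'a

definition col_ord :: "nat \<Rightarrow> (nat \<Rightarrow> 'a::field) \<Rightarrow> (nat \<Rightarrow> 'a) \<Rightarrow> 'a color" where
  "col_ord d x y =
     (let i = first_diff x y; s = x i + y i in
      if dotp d x y = 0 then ZERO i s
      else if dotp d x y = dotp d x x then UP i s
      else if dotp d x y = dotp d y y then DOWN i s
      else DOT (dotp d x y))"

definition phi :: "('a \<Rightarrow> 'a \<Rightarrow> bool) \<Rightarrow> nat \<Rightarrow> (nat \<Rightarrow> 'a::field) \<Rightarrow> (nat \<Rightarrow> 'a) \<Rightarrow> 'a color" where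
  "phi lt d x y = (if lex_less lt x y then col_ord d x y else col_ord d y x)"

definition colors :: "('a \<Rightarrow> 'a \<Rightarrow> bool) \<Rightarrow> nat \<Rightarrow> (nat \<Rightarrow> 'a::field) set \<Rightarrow> 'a color set" where
  "colors lt d A = {phi lt d a b | a b. a \<in> A \<and> b \<in> A \<and> a \<noteq> b}"

inductive leftover :: "('a \<Rightarrow> 'a \<Rightarrow> bool) \<Rightarrow> nat \<Rightarrow> (nat \<Rightarrow> 'a::field) set \<Rightarrow> bool"
  for lt d where
  single: "leftover lt d {x}"
| join: "\<lbrakk> A \<noteq> {}; B \<noteq> {}; A \<inter> B = {}; leftover lt d A; leftover lt d B;
          colors lt d A \<inter> colors lt d B = {};
          \<forall>a\<in>A. \<forall>b\<in>B. phi lt d a b = \<gamma>;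
          \<gamma> \<notin> colors lt d A \<union> colors lt d B \<rbrakk> \<Longrightarrow> leftover lt d (A \<union> B)"

definition falling_star :: "('a \<Rightarrow> 'a \<Rightarrow> bool) \<Rightarrow> nat \<Rightarrow> (nat \<Rightarrow> 'a::field) set
    \<Rightarrow> (nat \<Rightarrow> (nat \<Rightarrow> 'a)) \<Rightarrow> nat \<Rightarrow> bool" where
  "falling_star lt d S s t \<longleftrightarrow>
     s ` {1..t} \<subseteq> S \<and> inj_on s {1..t} \<and>
     (\<forall>i\<in>{2..t}. \<exists>\<alpha>. \<forall>j\<in>{1..<i}. phi lt d (s i) (s j) = \<alpha>)"

definition FS :: "('a \<Rightarrow> 'a \<Rightarrow> bool) \<Rightarrow> nat \<Rightarrow> (nat \<Rightarrow> 'a::field) set \<Rightarrow> nat" where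
  "FS lt d S = Max {t. \<exists>s. falling_star lt d S s t}"

end

theory Submission
  imports Defs
begin

text \<open>Induct on the leftover structure \<open>S = A \<union> B\<close>. The larger part, say \<open>A\<close>, contains a
  falling star of length \<open>t + 1\<close> with \<open>|A| \<le> 2^t\<close>. Every vertex of \<open>B\<close> sees all of \<open>A\<close> in
  the single colour \<open>\<gamma>\<close>, so appending any \<open>b \<in> B\<close> to that star gives a falling star of
  length \<open>t + 2\<close> in \<open>S\<close>, while \<open>|S| \<le> 2|A| \<le> 2^(t+1)\<close>.\<close>

lemma first_diff_commute: "first_diff x y = first_diff y x"
  unfolding first_diff_def by metis

lemma first_diff_neq: "x \<noteq> y \<Longrightarrow> x (first_diff x y) \<noteq> y (first_diff x y)"
  unfolding first_diff_def by (rule LeastI_ex) (use fun_eq_iff in blast)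

lemma first_diff_nonzero:
  assumes "x \<in> vecs d" "y \<in> vecs d" "x \<noteq> y"
  shows "x (first_diff x y) \<noteq> 0" "y (first_diff x y) \<noteq> 0"
proof -
  have "first_diff x y < d"
  proof (rule ccontr)
    assume "\<not> first_diff x y < d"
    then show False
      using first_diff_neq[OF assms(3)] assms(1,2) by (simp add: vecs_def)
  qed
  then show "x (first_diff x y) \<noteq> 0" "y (first_diff x y) \<noteq> 0"
    using assms(1,2) unfolding vecs_def by auto
qed

lemma lex_less_asym_total:
  assumes lt: "strict_linorder_on (UNIV - {0}) lt"
    and "x \<in> vecs d" "y \<in> vecs d" "x \<noteq> y"
  shows "lex_less lt y x \<longleftrightarrow> \<not> lex_less lt x y"
proof -
  define i where "i = first_diff x y"
  have ne: "x i \<noteq> y i" unfolding i_def by (rule first_diff_neq) fact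
  have nz: "x i \<in> UNIV - {0}" "y i \<in> UNIV - {0}"
    using first_diff_nonzero[OF assms(2-4)] unfolding i_def by auto
  have "lt (y i) (x i) \<longleftrightarrow> \<not> lt (x i) (y i)"
    using lt nz ne unfolding strict_linorder_on_def by metis
  then show ?thesis
    unfolding lex_less_def first_diff_commute[of y x] i_def[symmetric] using assms(4) by auto
qed

lemma phi_commute:
  assumes "strict_linorder_on (UNIV - {0}) lt" "x \<in> vecs d" "y \<in> vecs d"
  shows "phi lt d x y = phi lt d y x"
  using lex_less_asym_total[OF assms] unfolding phi_def by (cases "x = y") auto

lemma falling_star_mono: "falling_star lt d A s t \<Longrightarrow> A \<subseteq> B \<Longrightarrow> falling_star lt d B s t"
  unfolding falling_star_def by blast

lemma falling_star_length_le_card: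
  assumes "falling_star lt d S s t" "finite S"
  shows "t \<le> card S"
proof -
  have "card {1..t} \<le> card S"
    using assms card_inj_on_le unfolding falling_star_def by blast
  then show ?thesis by simp
qed

lemma falling_star_le_FS:
  assumes "falling_star lt d S s t" "finite S"
  shows "t \<le> FS lt d S"
proof -
  have "{t. \<exists>s. falling_star lt d S s t} \<subseteq> {..card S}"
    using falling_star_length_le_card[OF _ assms(2)] by blast
  then have "finite {t. \<exists>s. falling_star lt d S s t}"
    by (rule finite_subset) simp
  then show ?thesis
    unfolding FS_def using assms(1) by (intro Max_ge) blast+
qed

lemma falling_star_snoc:
  assumes star: "falling_star lt d A s t" and "x \<notin> A"
    and \<gamma>: "\<And>j. j \<in> {1..t} \<Longrightarrow> phi lt d x (s j) = \<gamma>"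
  shows "falling_star lt d (insert x A) (s(Suc t := x)) (Suc t)"
proof -
  let ?s = "s(Suc t := x)"
  have on_old: "?s j = s j" if "j \<in> {1..t}" for j
    using that by simp
  have img: "s ` {1..t} \<subseteq> A" and inj: "inj_on s {1..t}"
    and old: "\<And>i. i \<in> {2..t} \<Longrightarrow> \<exists>\<alpha>. \<forall>j\<in>{1..<i}. phi lt d (s i) (s j) = \<alpha>"
    using star unfolding falling_star_def by auto
  have ivl: "{1..Suc t} = insert (Suc t) {1..t}" by auto
  have img': "?s ` {1..t} = s ` {1..t}"
    using on_old by (rule image_cong[OF refl])
  have "?s ` {1..Suc t} \<subseteq> insert x A"
    unfolding ivl image_insert img' fun_upd_same by (rule insert_mono[OF img])
  moreover have "inj_on ?s {1..Suc t}"
  proof -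
    have "inj_on ?s {1..t} \<longleftrightarrow> inj_on s {1..t}"
      by (rule inj_on_cong) (rule on_old)
    moreover have "{1..t} - {Suc t} = {1..t}" by auto
    ultimately show ?thesis
      unfolding ivl inj_on_insert img' using inj img \<open>x \<notin> A\<close> by auto
  qed
  moreover have "\<exists>\<alpha>. \<forall>j\<in>{1..<i}. phi lt d (?s i) (?s j) = \<alpha>" if "i \<in> {2..Suc t}" for i
  proof (cases "i = Suc t")
    case True
    then show ?thesis using \<gamma> by auto
  next
    case False
    with that old show ?thesis by auto
  qed
  ultimately show ?thesis unfolding falling_star_def by blast
qed

lemma leftover_finite: "leftover lt d S \<Longrightarrow> finite S"
  by (induction rule: leftover.induct) auto

lemma falling_star_across_join:
  assumes star: "falling_star lt d X s (Suc t)" and "card X \<le> 2 ^ t"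
    and "finite X" "finite Y" "X \<inter> Y = {}" "card Y \<le> card X"
    and "y \<in> Y" and \<gamma>: "\<And>x. x \<in> X \<Longrightarrow> phi lt d y x = \<gamma>"
  shows "\<exists>s t. falling_star lt d (X \<union> Y) s (Suc t) \<and> card (X \<union> Y) \<le> 2 ^ t"
proof (intro exI conjI)
  have "y \<notin> X" using assms(5,7) by blast
  moreover have "\<And>j. j \<in> {1..Suc t} \<Longrightarrow> phi lt d y (s j) = \<gamma>"
    using star \<gamma> unfolding falling_star_def by blast
  ultimately have "falling_star lt d (insert y X) (s(Suc (Suc t) := y)) (Suc (Suc t))"
    by (rule falling_star_snoc[OF star])
  then show "falling_star lt d (X \<union> Y) (s(Suc (Suc t) := y)) (Suc (Suc t))"
    by (rule falling_star_mono) (use \<open>y \<in> Y\<close> in blast)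
  show "card (X \<union> Y) \<le> 2 ^ Suc t"
    using card_Un_disjoint[OF assms(3-5)] assms(2,6) by simp
qed

lemma leftover_falling_star:
  assumes "leftover lt d S" "S \<subseteq> vecs d" and lt: "strict_linorder_on (UNIV - {0}) lt"
  shows "\<exists>s t. falling_star lt d S s (Suc t) \<and> card S \<le> 2 ^ t"
  using assms(1,2)
proof (induction rule: leftover.induct)
  case (single x)
  have "falling_star lt d {x} (\<lambda>_. x) 1"
    unfolding falling_star_def by auto
  then show ?case by force
next
  case (join A B \<gamma>)
  have fin: "finite A" "finite B"
    using join.hyps(4,5) by (simp_all add: leftover_finite)
  show ?case
  proof (cases "card B \<le> card A")
    case True
    obtain s t where star: "falling_star lt d A s (Suc t)" and "card A \<le> 2 ^ t"
      using join.IH(1) join.prems by auto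
    obtain b where b: "b \<in> B" using join.hyps(2) by blast
    have "phi lt d b a = \<gamma>" if "a \<in> A" for a
    proof -
      have "phi lt d b a = phi lt d a b"
        by (rule phi_commute[OF lt]) (use join.prems that b in auto)
      also have "\<dots> = \<gamma>"
        using join.hyps(7) that b by blast
      finally show ?thesis .
    qed
    from falling_star_across_join[OF star \<open>card A \<le> 2 ^ t\<close> fin join.hyps(3) True b this]
    show ?thesis .
  next
    case False
    obtain s t where star: "falling_star lt d B s (Suc t)" and "card B \<le> 2 ^ t"
      using join.IH(2) join.prems by auto
    obtain a where a: "a \<in> A" using join.hyps(1) by blast
    have "phi lt d a b = \<gamma>" if "b \<in> B" for b
      using join.hyps(7) that a by blast
    from falling_star_across_join[OF star \<open>card B \<le> 2 ^ t\<close> fin(2,1) _ _ a this]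
    show ?thesis
      using join.hyps(3) False by (simp add: Int_commute Un_commute)
  qed
qed

lemma ceiling_log2_le:
  assumes "0 < x" "x \<le> 2 ^ k"
  shows "\<lceil>log 2 x\<rceil> \<le> int k"
proof -
  have "log 2 x \<le> log 2 (2 ^ k)"
    using assms by (intro log_mono) simp_all
  then show ?thesis by (simp add: ceiling_le_iff log_nat_power)
qed

theorem lemma3p10:
  fixes lt :: "'a::{field,finite} \<Rightarrow> 'a \<Rightarrow> bool"
    and d p :: nat and S :: "(nat \<Rightarrow> 'a) set"
  assumes "odd (card (UNIV :: 'a set))"
    and "d \<ge> 1"
    and "strict_linorder_on (UNIV - {0}) lt"
    and "S \<subseteq> vecs d"
    and "card S = p" and "p \<ge> 1"
    and "leftover lt d S"
  shows "int (FS lt d S) \<ge> \<lceil>log 2 (real p)\<rceil> + 1"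
proof -
  obtain s t where star: "falling_star lt d S s (Suc t)" and "p \<le> 2 ^ t"
    using leftover_falling_star[OF assms(7,4,3)] assms(5) by blast
  have "real p \<le> 2 ^ t"
    using \<open>p \<le> 2 ^ t\<close> by (metis of_nat_le_iff of_nat_numeral of_nat_power)
  with assms(6) have "\<lceil>log 2 (real p)\<rceil> \<le> int t"
    by (intro ceiling_log2_le) simp_all
  moreover have "Suc t \<le> FS lt d S"
    using falling_star_le_FS[OF star leftover_finite[OF assms(7)]] .
  ultimately show ?thesis by linarith
qed

end
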